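(* Let $A\subseteq\mathbb{N}$ and $x\in\mathbb{R}$. There exists a density measure $\mu$ such that $\mu(A)=x$ if and only if $x\in[\underline{\underline{d}}(A),\overline{\overline{d}}(A)]$.
   Context: $\mathbb{N}=\{1,2,3,\dots\}$. For $A\subseteq\mathbb{N}$ let $A(n)=|A\cap[1,n]|$. Let $\mathcal{D}$ be the collection of all $A\subseteq\mathbb{N}$ for which the asymptotic density $d(A)=\lim_{n\to\infty}\frac{A(n)}{n}$ exists. A density measure is a function $\mu:\mathcal{P}(\mathbb{N})\to[0,1]$ with $\mu(\mathbb{N})=1$, $\mu(A\cup B)=\mu(A)+\mu(B)$ for all disjoint $A,B\subseteq\mathbb{N}$, and $\mu(A)=d(A)$ for all $A\in\mathcal{D}$. Define $\underline{\underline{d}}(A)=\sup\{d(B);\ B\subseteq A,\ B\in\mathcal{D}\}$ and $\overline{\overline{d}}(A)=\inf\{d(C);\ C\supseteq A,\ C\in\mathcal{D}\}$. *)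

theory Defs
  imports Complex_Main
begin

definition Npos :: "nat set" where
  "Npos = {n. 1 \<le> n}"

definition cnt :: "nat set \<Rightarrow> nat \<Rightarrow> nat" where
  "cnt A n = card (A \<inter> {1..n})"

definition has_density :: "nat set \<Rightarrow> real \<Rightarrow> bool" where
  "has_density A d \<longleftrightarrow> ((\<lambda>n. real (cnt A n) / real n) \<longlongrightarrow> d) sequentially"

definition DD :: "nat set set" where
  "DD = {A. A \<subseteq> Npos \<and> (\<exists>d. has_density A d)}"

definition dens :: "nat set \<Rightarrow> real" where
  "dens A = lim (\<lambda>n. real (cnt A n) / real n)"

text \<open>Density measure: a function on P(N) (values outside P(N) irrelevant).\<close>
definition density_measure :: "(nat set \<Rightarrow> real) \<Rightarrow> bool" where
  "density_measure \<mu> \<longleftrightarrow>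
     (\<forall>A. A \<subseteq> Npos \<longrightarrow> 0 \<le> \<mu> A \<and> \<mu> A \<le> 1) \<and>
     \<mu> Npos = 1 \<and>
     (\<forall>A B. A \<subseteq> Npos \<longrightarrow> B \<subseteq> Npos \<longrightarrow> A \<inter> B = {} \<longrightarrow> \<mu> (A \<union> B) = \<mu> A + \<mu> B) \<and>
     (\<forall>A\<in>DD. \<mu> A = dens A)"

definition lower_dd :: "nat set \<Rightarrow> real" where
  "lower_dd A = Sup {dens B | B. B \<subseteq> A \<and> B \<in> DD}"

definition upper_dd :: "nat set \<Rightarrow> real" where
  "upper_dd A = Inf {dens C | C. A \<subseteq> C \<and> C \<in> DD}"

end

theory Submission
  imports Defs "HOL-Analysis.Analysis"
begin

text \<open>
  Every density measure is monotone and agrees with \<open>d\<close> on \<open>DD\<close>, so \<open>\<mu> A\<close> lies between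
  \<open>lower_dd A\<close> and \<open>upper_dd A\<close>. Conversely, convex combinations of density measures are
  density measures, so it suffices to attain both endpoints, and by passing to complements
  only the upper one. If \<open>l < upper_dd A\<close>, then \<open>A\<close> has arbitrarily late windows \<open>(k, m]\<close>
  of length at least \<open>\<delta> m\<close> in which its relative density is at least \<open>l\<close>: otherwise, adding
  \<open>n\<close> to \<open>A\<close> whenever the running count falls below \<open>l n\<close> would produce a superset of
  density \<open>l\<close>. The window averages \<open>B \<mapsto> |B \<inter> (k, m]| / (m - k)\<close> are finitely additive
  and converge to \<open>d C\<close> for \<open>C \<in> DD\<close>, so any cluster point of them in the compact space of
  \<open>[0,1]\<close>-valued set functions is a density measure with \<open>l \<le> \<mu> A\<close>. A second cluster point
  argument, with \<open>l\<close> tending to \<open>upper_dd A\<close>, attains the upper endpoint.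
\<close>

section \<open>Cluster points in the cube of unit-valued functions\<close>

lemma compact_unit_valued_functions: "compact {f :: 'a \<Rightarrow> real. \<forall>B. f B \<in> {0..1}}"
proof -
  have "compactin (product_topology (\<lambda>_. euclidean) UNIV) (PiE UNIV (\<lambda>_::'a. {0..1::real}))"
    by (simp add: compactin_PiE)
  moreover have "PiE UNIV (\<lambda>_::'a. {0..1::real}) = {f. \<forall>B. f B \<in> {0..1}}"
    by (auto simp: PiE_def Pi_def)
  ultimately show ?thesis
    by (simp add: euclidean_product_topology)
qed

lemma unit_valued_sequence_has_cluster_point:
  fixes x :: "nat \<Rightarrow> 'a \<Rightarrow> real"
  assumes "\<And>i B. x i B \<in> {0..1}"
  shows "\<exists>z. inf (nhds z) (filtermap x sequentially) \<noteq> bot"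
proof -
  have "filtermap x sequentially \<noteq> bot" by (simp add: filtermap_bot_iff)
  moreover have "eventually (\<lambda>f. f \<in> {f. \<forall>B. f B \<in> {0..1}}) (filtermap x sequentially)"
    using assms by (simp add: eventually_filtermap)
  ultimately show ?thesis
    using compact_unit_valued_functions[unfolded compact_filter] by blast
qed

lemma cluster_point_closed_condition:
  fixes x :: "nat \<Rightarrow> 'a::topological_space" and g :: "'a \<Rightarrow> 'b::topological_space"
  assumes z: "inf (nhds z) (filtermap x sequentially) \<noteq> bot"
    and g: "continuous_on UNIV g" and S: "closed S"
    and ev: "eventually (\<lambda>i. g (x i) \<in> S) sequentially"
  shows "g z \<in> S"
proof (rule ccontr)
  assume "g z \<notin> S"
  then have "eventually (\<lambda>y. y \<in> - S) (nhds (g z))"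
    using S by (intro eventually_nhds_in_open) auto
  moreover have "(g \<longlongrightarrow> g z) (nhds z)"
    using g by (metis UNIV_I continuous_on_def tendsto_at_iff_tendsto_nhds)
  ultimately have near: "eventually (\<lambda>f. g f \<in> - S) (nhds z)"
    by (rule filterlim_iff[THEN iffD1, rule_format, rotated])
  have along: "eventually (\<lambda>f. g f \<in> S) (filtermap x sequentially)"
    using ev by (simp add: eventually_filtermap)
  have "eventually (\<lambda>f. False) (inf (nhds z) (filtermap x sequentially))"
    using eventually_inf[THEN iffD2, OF exI[of _ "\<lambda>f. g f \<in> - S"], OF exI[of _ "\<lambda>f. g f \<in> S"]]
      near along by auto
  then show False using z by (simp add: eventually_False)
qed

lemma cluster_point_eval_eq_lim:
  fixes x :: "nat \<Rightarrow> 'a \<Rightarrow> real"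
  assumes z: "inf (nhds z) (filtermap x sequentially) \<noteq> bot"
    and lim: "(\<lambda>i. x i a) \<longlonglongrightarrow> c"
  shows "z a = c"
proof -
  have "z a \<in> cball c \<eta>" if "\<eta> > 0" for \<eta>
  proof (rule cluster_point_closed_condition[OF z, of "\<lambda>f. f a"])
    show "eventually (\<lambda>i. x i a \<in> cball c \<eta>) sequentially"
      using tendstoD[OF lim that] by (auto elim!: eventually_mono simp: dist_commute)
  qed simp_all
  then have "dist (z a) c \<le> 0 + \<eta>" if "\<eta> > 0" for \<eta>
    using that by (simp add: dist_commute)
  then show ?thesis
    using field_le_epsilon[of "dist (z a) c" 0] by simp
qed

lemma cluster_point_eval_ge_lim:
  fixes x :: "nat \<Rightarrow> 'a \<Rightarrow> real"
  assumes z: "inf (nhds z) (filtermap x sequentially) \<noteq> bot"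
    and lower: "\<And>i. t i \<le> x i a" and t: "t \<longlonglongrightarrow> t0"
  shows "t0 \<le> z a"
proof -
  have near: "t0 - \<eta> \<le> z a" if "\<eta> > 0" for \<eta>
  proof -
    have "eventually (\<lambda>i. x i a \<in> {t0 - \<eta>..}) sequentially"
      using tendstoD[OF t that]
    proof eventually_elim
      case (elim i)
      then show ?case using lower[of i] by (auto simp: dist_real_def abs_less_iff)
    qed
    then show ?thesis
      using cluster_point_closed_condition[OF z, of "\<lambda>f. f a" "{t0 - \<eta>..}"] by simp
  qed
  show ?thesis
  proof (rule field_le_epsilon)
    fix e :: real assume "0 < e"
    from near[OF this] show "t0 \<le> z a + e" by simp
  qed
qed

section \<open>Counting functions and asymptotic density\<close>

lemma cnt_0 [simp]: "cnt B 0 = 0"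
  by (simp add: cnt_def)

lemma cnt_Suc: "cnt B (Suc n) = cnt B n + (if Suc n \<in> B then 1 else 0)"
proof -
  have "B \<inter> {1..Suc n} = (if Suc n \<in> B then insert (Suc n) (B \<inter> {1..n}) else B \<inter> {1..n})"
    by (auto simp: le_Suc_eq)
  then show ?thesis by (simp add: cnt_def)
qed

lemma cnt_mono: "k \<le> m \<Longrightarrow> cnt B k \<le> cnt B m"
  unfolding cnt_def by (intro card_mono) auto

lemma cnt_increase_le: "k \<le> m \<Longrightarrow> cnt B m + k \<le> cnt B k + m"
proof (induction m)
  case (Suc m)
  then show ?case by (cases "k = Suc m") (auto simp: cnt_Suc)
qed simp

lemma cnt_le: "cnt B n \<le> n"
  using cnt_increase_le[of 0 n B] by simp

lemma cnt_Npos [simp]: "cnt Npos n = n"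
proof -
  have "Npos \<inter> {1..n} = {1..n}" by (auto simp: Npos_def)
  then show ?thesis by (simp add: cnt_def)
qed

lemma cnt_Un_disjoint: "B \<inter> C = {} \<Longrightarrow> cnt (B \<union> C) n = cnt B n + cnt C n"
  unfolding cnt_def by (subst card_Un_disjoint[symmetric]) (auto simp: Int_Un_distrib2)

lemma cnt_Npos_Diff: "C \<subseteq> Npos \<Longrightarrow> cnt (Npos - C) n = n - cnt C n"
proof -
  assume "C \<subseteq> Npos"
  then have "(Npos - C) \<inter> {1..n} = {1..n} - (C \<inter> {1..n})" "C \<inter> {1..n} \<subseteq> {1..n}"
    by (auto simp: Npos_def)
  then show ?thesis unfolding cnt_def by (simp add: card_Diff_subset finite_subset)
qed

lemma has_density_imp_dens: "has_density C d \<Longrightarrow> dens C = d"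
  unfolding dens_def has_density_def by (rule limI)

lemma DD_has_density: "C \<in> DD \<Longrightarrow> has_density C (dens C)"
  unfolding DD_def using has_density_imp_dens by blast

lemma dens_bounds:
  assumes "C \<in> DD"
  shows "0 \<le> dens C" "dens C \<le> 1"
proof -
  have "real (cnt C n) / real n \<le> 1" for n
    using cnt_le[of C n] by (cases n) (simp_all add: divide_le_eq_1)
  then show "0 \<le> dens C" "dens C \<le> 1"
    using DD_has_density[OF assms] unfolding has_density_def
    by (meson LIMSEQ_le_const LIMSEQ_le_const2 divide_nonneg_nonneg of_nat_0_le_iff)+
qed

lemma DD_empty: "{} \<in> DD" and dens_empty: "dens {} = 0"
proof -
  have "has_density {} 0"
    unfolding has_density_def cnt_def by simp
  then show "{} \<in> DD" "dens {} = 0"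
    using has_density_imp_dens unfolding DD_def by auto
qed

lemma DD_Npos: "Npos \<in> DD" and dens_Npos: "dens Npos = 1"
proof -
  have "eventually (\<lambda>n. 1 = real (cnt Npos n) / real n) sequentially"
    by (rule eventually_sequentiallyI[of 1]) simp
  then have "has_density Npos 1"
    unfolding has_density_def by (rule tendsto_cong[THEN iffD1]) simp
  then show "Npos \<in> DD" "dens Npos = 1"
    using has_density_imp_dens unfolding DD_def by auto
qed

lemma
  assumes "C \<in> DD"
  shows DD_Npos_Diff: "Npos - C \<in> DD" and dens_Npos_Diff: "dens (Npos - C) = 1 - dens C"
proof -
  have C: "C \<subseteq> Npos" using assms by (simp add: DD_def)
  have "eventually (\<lambda>n. 1 - real (cnt C n) / real n = real (cnt (Npos - C) n) / real n) sequentially"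
  proof (rule eventually_sequentiallyI[of 1])
    fix n :: nat assume "1 \<le> n"
    moreover have "real (cnt (Npos - C) n) = real n - real (cnt C n)"
      using cnt_le[of C n] by (simp add: cnt_Npos_Diff[OF C])
    ultimately show "1 - real (cnt C n) / real n = real (cnt (Npos - C) n) / real n"
      by (simp add: diff_divide_distrib)
  qed
  moreover have "((\<lambda>n. 1 - real (cnt C n) / real n) \<longlongrightarrow> 1 - dens C) sequentially"
    using DD_has_density[OF assms] unfolding has_density_def by (intro tendsto_intros)
  ultimately have "has_density (Npos - C) (1 - dens C)"
    unfolding has_density_def by (rule tendsto_cong[THEN iffD1])
  then show "Npos - C \<in> DD" "dens (Npos - C) = 1 - dens C"
    using has_density_imp_dens unfolding DD_def by auto
qed

lemma has_density_uniform_error: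
  assumes h: "has_density C d" and e: "\<epsilon> > 0"
  shows "\<exists>M. \<forall>m\<ge>M. \<forall>k\<le>m. \<bar>real (cnt C k) - d * real k\<bar> \<le> \<epsilon> * real m"
proof -
  obtain N where N: "\<And>n. n \<ge> N \<Longrightarrow> \<bar>real (cnt C n) / real n - d\<bar> < \<epsilon>"
    using h e unfolding has_density_def LIMSEQ_iff real_norm_def by blast
  define N' where "N' = max N 1"
  define M where "M = max N' (nat \<lceil>real N' * (1 + \<bar>d\<bar>) / \<epsilon>\<rceil>)"
  have "\<bar>real (cnt C k) - d * real k\<bar> \<le> \<epsilon> * real m" if "m \<ge> M" "k \<le> m" for m k
  proof (cases "k \<ge> N'")
    case True
    then have k: "real k > 0" "k \<ge> N" by (auto simp: N'_def)
    have "real (cnt C k) - d * real k = real k * (real (cnt C k) / real k - d)"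
      using k by (simp add: right_diff_distrib)
    then have "\<bar>real (cnt C k) - d * real k\<bar> = real k * \<bar>real (cnt C k) / real k - d\<bar>"
      by (simp add: abs_mult)
    also have "\<dots> \<le> real k * \<epsilon>" using N[OF k(2)] k by simp
    also have "\<dots> \<le> real m * \<epsilon>" using that e by (intro mult_right_mono) simp_all
    finally show ?thesis by (simp add: mult.commute)
  next
    case False
    have "\<bar>real (cnt C k) - d * real k\<bar> \<le> real (cnt C k) + \<bar>d\<bar> * real k"
      using abs_triangle_ineq4[of "real (cnt C k)" "d * real k"] by (simp add: abs_mult)
    also have "\<dots> \<le> real N' * (1 + \<bar>d\<bar>)"
      using cnt_le[of C k] False mult_right_mono[of "real k" "real N'" "1 + \<bar>d\<bar>"]
      by (simp add: algebra_simps)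
    also have "\<dots> \<le> \<epsilon> * real m"
    proof -
      have "real N' * (1 + \<bar>d\<bar>) / \<epsilon> \<le> real (nat \<lceil>real N' * (1 + \<bar>d\<bar>) / \<epsilon>\<rceil>)"
        by (rule real_nat_ceiling_ge)
      also have "\<dots> \<le> real m" using that unfolding M_def by linarith
      finally show ?thesis using e by (simp add: pos_divide_le_eq mult.commute)
    qed
    finally show ?thesis .
  qed
  then show ?thesis by blast
qed

lemma dens_le_lower_dd: "B \<subseteq> A \<Longrightarrow> B \<in> DD \<Longrightarrow> dens B \<le> lower_dd A"
  unfolding lower_dd_def using dens_bounds by (intro cSup_upper bdd_aboveI[of _ 1]) auto

lemma upper_dd_le_dens: "A \<subseteq> C \<Longrightarrow> C \<in> DD \<Longrightarrow> upper_dd A \<le> dens C"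
  unfolding upper_dd_def using dens_bounds by (intro cInf_lower bdd_belowI[of _ 0]) auto

lemma upper_dd_le_1: "A \<subseteq> Npos \<Longrightarrow> upper_dd A \<le> 1"
  using upper_dd_le_dens[OF _ DD_Npos] dens_Npos by simp

lemma lower_dd_Npos_Diff_ge:
  assumes "A \<subseteq> Npos"
  shows "1 - upper_dd (Npos - A) \<le> lower_dd A"
proof -
  have "1 - lower_dd A \<le> upper_dd (Npos - A)"
    unfolding upper_dd_def
  proof (rule cInf_greatest)
    show "{dens C |C. Npos - A \<subseteq> C \<and> C \<in> DD} \<noteq> {}" using DD_Npos by auto
  next
    fix v assume "v \<in> {dens C |C. Npos - A \<subseteq> C \<and> C \<in> DD}"
    then obtain C where C: "Npos - A \<subseteq> C" "C \<in> DD" "v = dens C" by auto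
    have "Npos - C \<subseteq> A" using C(1) by auto
    from dens_le_lower_dd[OF this DD_Npos_Diff[OF C(2)]]
    show "1 - lower_dd A \<le> v" using C(3) dens_Npos_Diff[OF C(2)] by simp
  qed
  then show ?thesis by simp
qed

lemma density_measure_Diff:
  assumes "density_measure \<mu>" "X \<subseteq> Y" "Y \<subseteq> Npos"
  shows "\<mu> Y = \<mu> X + \<mu> (Y - X)"
proof -
  have "Y = X \<union> (Y - X)" using assms by auto
  then show ?thesis using assms unfolding density_measure_def
    by (metis Diff_disjoint Diff_subset order_trans)
qed

lemma density_measure_mono:
  assumes "density_measure \<mu>" "X \<subseteq> Y" "Y \<subseteq> Npos"
  shows "\<mu> X \<le> \<mu> Y"
  using density_measure_Diff[OF assms] assms unfolding density_measure_def
  by (metis Diff_subset le_add_same_cancel1 order_trans)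

lemma density_measure_between_lower_upper:
  assumes \<mu>: "density_measure \<mu>" and A: "A \<subseteq> Npos"
  shows "lower_dd A \<le> \<mu> A" "\<mu> A \<le> upper_dd A"
proof -
  have dens: "\<mu> C = dens C" if "C \<in> DD" for C
    using \<mu> that unfolding density_measure_def by blast
  show "lower_dd A \<le> \<mu> A"
    unfolding lower_dd_def
  proof (rule cSup_least)
    show "{dens B |B. B \<subseteq> A \<and> B \<in> DD} \<noteq> {}"
      using DD_empty by auto
  next
    fix v assume "v \<in> {dens B |B. B \<subseteq> A \<and> B \<in> DD}"
    then obtain B where B: "B \<subseteq> A" "B \<in> DD" "v = dens B" by auto
    then show "v \<le> \<mu> A"
      using density_measure_mono[OF \<mu> B(1) A] dens[OF B(2)] by simp
  qed
  show "\<mu> A \<le> upper_dd A"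
    unfolding upper_dd_def
  proof (rule cInf_greatest)
    show "{dens C |C. A \<subseteq> C \<and> C \<in> DD} \<noteq> {}"
      using DD_Npos A by auto
  next
    fix v assume "v \<in> {dens C |C. A \<subseteq> C \<and> C \<in> DD}"
    then obtain C where "A \<subseteq> C" "C \<in> DD" "v = dens C" by auto
    then show "\<mu> A \<le> v"
      using density_measure_mono[OF \<mu>, of A C] dens[of C] by (auto simp: DD_def)
  qed
qed

lemma density_measure_convex_combination:
  assumes \<mu>: "density_measure \<mu>" and \<nu>: "density_measure \<nu>" and t: "0 \<le> t" "t \<le> 1"
  shows "density_measure (\<lambda>B. (1 - t) * \<mu> B + t * \<nu> B)"
  unfolding density_measure_def
proof (intro conjI allI impI ballI)
  fix A assume "A \<subseteq> Npos"
  then have "\<mu> A \<in> {0..1}" "\<nu> A \<in> {0..1}"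
    using \<mu> \<nu> unfolding density_measure_def by auto
  then show "0 \<le> (1 - t) * \<mu> A + t * \<nu> A" "(1 - t) * \<mu> A + t * \<nu> A \<le> 1"
    using t convex_bound_le[of "\<mu> A" 1 "\<nu> A" "1 - t" t] by auto
qed (use \<mu> \<nu> in \<open>auto simp: density_measure_def algebra_simps\<close>)

lemma density_measure_cluster_point:
  fixes x :: "nat \<Rightarrow> nat set \<Rightarrow> real"
  assumes range: "\<And>i B. x i B \<in> {0..1}"
    and Npos: "\<And>i. x i Npos = 1"
    and additive: "\<And>i B C. B \<subseteq> Npos \<Longrightarrow> C \<subseteq> Npos \<Longrightarrow> B \<inter> C = {} \<Longrightarrow> x i (B \<union> C) = x i B + x i C"
    and dens: "\<And>C. C \<in> DD \<Longrightarrow> (\<lambda>i. x i C) \<longlonglongrightarrow> dens C"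
    and lower: "\<And>i. t i \<le> x i A" and t: "t \<longlonglongrightarrow> t0"
  shows "\<exists>\<mu>. density_measure \<mu> \<and> (\<forall>B. \<mu> B \<in> {0..1}) \<and> t0 \<le> \<mu> A"
proof -
  obtain z where z: "inf (nhds z) (filtermap x sequentially) \<noteq> bot"
    using unit_valued_sequence_has_cluster_point[of x] range by blast
  have eval: "continuous_on UNIV (\<lambda>f::nat set \<Rightarrow> real. f B)" for B
    by simp
  have z_range: "z B \<in> {0..1}" for B
    by (rule cluster_point_closed_condition[OF z eval]) (use range in auto)
  have z_Npos: "z Npos = 1"
    using cluster_point_closed_condition[OF z eval, of "{1}" Npos] Npos by simp
  have z_additive: "z (B \<union> C) = z B + z C" if "B \<subseteq> Npos" "C \<subseteq> Npos" "B \<inter> C = {}" for B C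
  proof -
    have "continuous_on UNIV (\<lambda>f::nat set \<Rightarrow> real. f (B \<union> C) - f B - f C)"
      by (intro continuous_intros) simp_all
    from cluster_point_closed_condition[OF z this, of "{0}"] additive[OF that] show ?thesis
      by simp
  qed
  have "t0 \<le> z A"
    using cluster_point_eval_ge_lim[OF z lower t] .
  moreover have "density_measure z"
    unfolding density_measure_def
    using z_range z_Npos z_additive cluster_point_eval_eq_lim[OF z dens] by auto
  ultimately show ?thesis using z_range by blast
qed

section \<open>Window averages\<close>

definition window_density :: "nat set \<Rightarrow> nat \<Rightarrow> nat \<Rightarrow> real" where
  "window_density B k m = (real (cnt B m) - real (cnt B k)) / (real m - real k)"

definition has_dense_windows :: "nat set \<Rightarrow> real \<Rightarrow> real \<Rightarrow> bool" where
  "has_dense_windows A l \<delta> \<longleftrightarrow>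
     (\<forall>N. \<exists>m k. N \<le> m \<and> k \<le> m \<and> \<delta> * real m \<le> real m - real k \<and>
                l * (real m - real k) \<le> real (cnt A m) - real (cnt A k))"

lemma window_density_range:
  assumes "k < m"
  shows "window_density B k m \<in> {0..1}"
proof -
  have "cnt B k \<le> cnt B m" "cnt B m + k \<le> cnt B k + m"
    using cnt_mono cnt_increase_le assms by auto
  then show ?thesis
    using assms by (auto simp: window_density_def divide_le_eq_1 simp flip: of_nat_add)
qed

lemma window_density_Npos: "k < m \<Longrightarrow> window_density Npos k m = 1"
  by (simp add: window_density_def)

lemma window_density_Un_disjoint:
  "B \<inter> C = {} \<Longrightarrow> window_density (B \<union> C) k m = window_density B k m + window_density C k m"
  by (simp add: window_density_def cnt_Un_disjoint add_divide_distrib[symmetric])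

lemma window_density_tendsto:
  assumes C: "has_density C d" and \<delta>: "\<delta> > 0"
    and windows: "\<And>i. k i \<le> m i" "\<And>i. \<delta> * real (m i) \<le> real (m i) - real (k i)"
    and m: "filterlim m at_top sequentially"
  shows "(\<lambda>i. window_density C (k i) (m i)) \<longlonglongrightarrow> d"
proof (rule tendstoI)
  fix \<eta> :: real assume \<eta>: "\<eta> > 0"
  obtain M where M: "\<And>m' k'. m' \<ge> M \<Longrightarrow> k' \<le> m' \<Longrightarrow>
      \<bar>real (cnt C k') - d * real k'\<bar> \<le> \<eta> * \<delta> / 4 * real m'"
    using has_density_uniform_error[OF C, of "\<eta> * \<delta> / 4"] \<eta> \<delta> by auto
  have "eventually (\<lambda>i. max M 1 \<le> m i) sequentially"
    using m unfolding filterlim_at_top by blast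
  then show "eventually (\<lambda>i. dist (window_density C (k i) (m i)) d < \<eta>) sequentially"
  proof (rule eventually_mono)
    fix i assume i: "max M 1 \<le> m i"
    let ?m = "real (m i)" and ?k = "real (k i)"
    have "0 < \<delta> * ?m" using i \<delta> by simp
    then have len: "0 < ?m - ?k" using windows(2)[of i] by linarith
    have "\<bar>real (cnt C (m i)) - d * ?m\<bar> \<le> \<eta> * \<delta> / 4 * ?m"
      "\<bar>real (cnt C (k i)) - d * ?k\<bar> \<le> \<eta> * \<delta> / 4 * ?m"
      using M[of "m i" "m i"] M[of "m i" "k i"] i windows(1)[of i] by auto
    then have "\<bar>(real (cnt C (m i)) - d * ?m) - (real (cnt C (k i)) - d * ?k)\<bar> \<le> \<eta> * \<delta> / 2 * ?m"
      using abs_triangle_ineq4[of "real (cnt C (m i)) - d * ?m" "real (cnt C (k i)) - d * ?k"]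
      by linarith
    also have "\<dots> \<le> \<eta> / 2 * (?m - ?k)"
      using windows(2)[of i] \<eta> by (simp add: mult.assoc)
    also have "\<dots> < \<eta> * (?m - ?k)"
      using \<eta> len by simp
    finally have "\<bar>(real (cnt C (m i)) - real (cnt C (k i))) - d * (?m - ?k)\<bar> < \<eta> * (?m - ?k)"
      by (simp add: algebra_simps)
    then show "dist (window_density C (k i) (m i)) d < \<eta>"
      using len by (simp add: window_density_def dist_real_def abs_less_iff field_simps)
  qed
qed

lemma has_dense_windows_imp_density_measure:
  assumes \<delta>: "\<delta> > 0" and windows: "has_dense_windows A l \<delta>"
  shows "\<exists>\<mu>. density_measure \<mu> \<and> (\<forall>B. \<mu> B \<in> {0..1}) \<and> l \<le> \<mu> A"
proof -
  have "\<forall>i. \<exists>m k. Suc i \<le> m \<and> k \<le> m \<and> \<delta> * real m \<le> real m - real k \<and>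
                 l * (real m - real k) \<le> real (cnt A m) - real (cnt A k)"
    using windows unfolding has_dense_windows_def by blast
  then obtain m k where mk: "\<And>i. Suc i \<le> m i" "\<And>i. k i \<le> m i"
      "\<And>i. \<delta> * real (m i) \<le> real (m i) - real (k i)"
      "\<And>i. l * (real (m i) - real (k i)) \<le> real (cnt A (m i)) - real (cnt A (k i))"
    by metis
  have k_less_m: "k i < m i" for i
  proof -
    have "0 < \<delta> * real (m i)" using mk(1)[of i] \<delta> by simp
    then have "real (k i) < real (m i)" using mk(3)[of i] by linarith
    then show ?thesis by simp
  qed
  have m: "filterlim m at_top sequentially"
    using mk(1) Suc_leD by (intro filterlim_at_top_mono[OF filterlim_ident] always_eventually) blast
  show ?thesis
  proof (rule density_measure_cluster_point[of "\<lambda>i B. window_density B (k i) (m i)"])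
    show "window_density B (k i) (m i) \<in> {0..1}" for i B
      using window_density_range[OF k_less_m] .
    show "window_density Npos (k i) (m i) = 1" for i
      using window_density_Npos[OF k_less_m] .
    show "window_density (B \<union> C) (k i) (m i) = window_density B (k i) (m i) + window_density C (k i) (m i)"
      if "B \<inter> C = {}" for i B C
      using window_density_Un_disjoint[OF that] .
    show "(\<lambda>i. window_density C (k i) (m i)) \<longlonglongrightarrow> dens C" if "C \<in> DD" for C
      using window_density_tendsto[OF DD_has_density[OF that] \<delta> mk(2,3) m] .
    show "l \<le> window_density A (k i) (m i)" for i
      using mk(4)[of i] k_less_m[of i] by (simp add: window_density_def le_divide_eq)
  qed simp
qed

section \<open>The greedy superset\<close>

text \<open>\<open>greedy_set A l\<close> contains \<open>A\<close> and every \<open>n\<close> at which its running count is below \<open>l n\<close>;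
  \<open>greedy_count A l n\<close> is its counting function.\<close>

fun greedy_count :: "nat set \<Rightarrow> real \<Rightarrow> nat \<Rightarrow> nat" where
  "greedy_count A l 0 = 0"
| "greedy_count A l (Suc n) =
     (if Suc n \<in> A \<or> real (greedy_count A l n) < l * real (Suc n)
      then Suc (greedy_count A l n) else greedy_count A l n)"

definition greedy_set :: "nat set \<Rightarrow> real \<Rightarrow> nat set" where
  "greedy_set A l = {n. 1 \<le> n \<and> greedy_count A l n = Suc (greedy_count A l (n - 1))}"

lemma cnt_greedy_set: "cnt (greedy_set A l) n = greedy_count A l n"
proof (induction n)
  case (Suc n)
  have "Suc n \<in> greedy_set A l \<longleftrightarrow> greedy_count A l (Suc n) = Suc (greedy_count A l n)"
    by (simp add: greedy_set_def)
  then show ?case using Suc by (auto simp: cnt_Suc)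
qed simp

lemma greedy_set_subset_Npos: "greedy_set A l \<subseteq> Npos"
  by (auto simp: greedy_set_def Npos_def)

lemma subset_greedy_set: "A \<subseteq> Npos \<Longrightarrow> A \<subseteq> greedy_set A l"
  by (auto simp: greedy_set_def Npos_def elim!: Suc_le_D[THEN exE])

lemma greedy_count_ge: "l \<le> 1 \<Longrightarrow> l * real n - 1 \<le> real (greedy_count A l n)"
  by (induction n) (auto simp: algebra_simps)

text \<open>Take \<open>k\<close> to be the last time the threshold \<open>l k\<close> forced an increment; after \<open>k\<close> the
  greedy count grows only along \<open>A\<close>.\<close>

lemma greedy_count_last_forced:
  "\<exists>k\<le>n. real (greedy_count A l k) \<le> l * real k + 1 \<and>
          greedy_count A l n + cnt A k \<le> greedy_count A l k + cnt A n"
proof (induction n)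
  case (Suc n)
  then obtain k where k: "k \<le> n" "real (greedy_count A l k) \<le> l * real k + 1"
      "greedy_count A l n + cnt A k \<le> greedy_count A l k + cnt A n"
    by blast
  show ?case
  proof (cases "real (greedy_count A l n) < l * real (Suc n)")
    case True
    then show ?thesis by (intro exI[of _ "Suc n"]) simp
  next
    case False
    then show ?thesis using k by (intro exI[of _ k]) (auto simp: cnt_Suc)
  qed
qed simp

lemma greedy_count_le:
  assumes l: "0 \<le> l" and \<delta>: "\<delta> > 0" and no_windows: "\<not> has_dense_windows A l \<delta>"
  shows "\<exists>N. \<forall>n\<ge>N. real (greedy_count A l n) \<le> (l + \<delta>) * real n + 1"
proof -
  obtain N where N: "\<And>m k. N \<le> m \<Longrightarrow> k \<le> m \<Longrightarrow> \<delta> * real m \<le> real m - real k \<Longrightarrow>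
      real (cnt A m) - real (cnt A k) < l * (real m - real k)"
    using no_windows unfolding has_dense_windows_def by (meson not_le)
  have "real (greedy_count A l n) \<le> (l + \<delta>) * real n + 1" if "N \<le> n" for n
  proof -
    obtain k where k: "k \<le> n" "real (greedy_count A l k) \<le> l * real k + 1"
        "greedy_count A l n + cnt A k \<le> greedy_count A l k + cnt A n"
      using greedy_count_last_forced by blast
    have "real (cnt A n) - real (cnt A k) \<le> l * (real n - real k) + \<delta> * real n"
    proof (cases "\<delta> * real n \<le> real n - real k")
      case True
      moreover have "0 \<le> \<delta> * real n" using \<delta> by simp
      ultimately show ?thesis using N[OF that k(1)] by linarith
    next
      case False
      have "cnt A n + k \<le> cnt A k + n"
        using cnt_increase_le[OF k(1)] .
      then have "real (cnt A n) - real (cnt A k) \<le> real n - real k"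
        by (simp flip: of_nat_add)
      moreover have "0 \<le> l * (real n - real k)" using l k(1) by simp
      ultimately show ?thesis using False by linarith
    qed
    moreover have "real (greedy_count A l n) + real (cnt A k) \<le> real (greedy_count A l k) + real (cnt A n)"
      using k(3) by (simp flip: of_nat_add)
    ultimately show ?thesis using k(2) by (simp add: algebra_simps)
  qed
  then show ?thesis by blast
qed

lemma has_density_greedy_set:
  assumes l: "0 \<le> l" "l \<le> 1" and no_windows: "\<forall>\<delta>>0. \<not> has_dense_windows A l \<delta>"
  shows "has_density (greedy_set A l) l"
  unfolding has_density_def cnt_greedy_set
proof (rule tendstoI)
  fix r :: real assume r: "r > 0"
  obtain N where N: "\<And>n. N \<le> n \<Longrightarrow> real (greedy_count A l n) \<le> (l + r / 2) * real n + 1"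
    using greedy_count_le[OF l(1), of "r / 2" A] no_windows r by auto
  obtain K :: nat where K: "2 / r < real K"
    using reals_Archimedean2 by blast
  show "eventually (\<lambda>n. dist (real (greedy_count A l n) / real n) l < r) sequentially"
  proof (rule eventually_mono[OF eventually_ge_at_top[of "max N K"]])
    fix n assume "max N K \<le> n"
    then have n: "N \<le> n \<and> 2 / r < real n"
      using K by auto
    moreover have "0 < 2 / r" using r by simp
    ultimately have pos: "0 < real n" by linarith
    have "1 < r / 2 * real n" using n r by (simp add: field_simps)
    then have "l * real n - r * real n < real (greedy_count A l n)"
      "real (greedy_count A l n) < l * real n + r * real n"
      using N[of n] n greedy_count_ge[OF l(2), of n A] by (auto simp: algebra_simps)
    then show "dist (real (greedy_count A l n) / real n) l < r"
      using pos by (simp add: dist_real_def abs_less_iff field_simps)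
  qed
qed

section \<open>The endpoints are attained\<close>

lemma dense_windows_below_upper_dd:
  assumes A: "A \<subseteq> Npos" and l: "l < upper_dd A"
  shows "\<exists>\<delta>>0. has_dense_windows A l \<delta>"
proof (cases "l < 0")
  case True
  have "has_dense_windows A l 1"
    unfolding has_dense_windows_def
  proof
    fix N
    have nonpos: "l * real N \<le> 0" using True by (simp add: mult_nonpos_nonneg)
    show "\<exists>m k. N \<le> m \<and> k \<le> m \<and> 1 * real m \<le> real m - real k \<and>
            l * (real m - real k) \<le> real (cnt A m) - real (cnt A k)"
      by (rule exI[of _ N], rule exI[of _ 0]) (use nonpos in auto)
  qed
  then show ?thesis by (intro exI[of _ 1]) simp
next
  case False
  show ?thesis
  proof (rule ccontr)
    assume "\<not> ?thesis"
    then have "has_density (greedy_set A l) l"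
      using has_density_greedy_set[of l A] False l upper_dd_le_1[OF A] by auto
    then have "upper_dd A \<le> l"
      using upper_dd_le_dens[OF subset_greedy_set[OF A]] greedy_set_subset_Npos
      by (metis DD_def has_density_imp_dens mem_Collect_eq)
    then show False using l by simp
  qed
qed

lemma upper_dd_attained:
  assumes A: "A \<subseteq> Npos"
  shows "\<exists>\<mu>. density_measure \<mu> \<and> \<mu> A = upper_dd A"
proof -
  define t where "t j = upper_dd A - 1 / real (Suc j)" for j
  have "\<exists>\<mu>. density_measure \<mu> \<and> (\<forall>B. \<mu> B \<in> {0..1}) \<and> t j \<le> \<mu> A" for j
    using dense_windows_below_upper_dd[OF A, of "t j"]
      has_dense_windows_imp_density_measure by (auto simp: t_def)
  then obtain \<mu> where \<mu>: "\<And>j. density_measure (\<mu> j)" "\<And>j B. \<mu> j B \<in> {0..1}" "\<And>j. t j \<le> \<mu> j A"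
    by metis
  have "t \<longlonglongrightarrow> upper_dd A"
    unfolding t_def[abs_def] using tendsto_diff[OF tendsto_const LIMSEQ_Suc[OF lim_1_over_n]] by simp
  obtain \<nu> where "density_measure \<nu>" "upper_dd A \<le> \<nu> A"
    using density_measure_cluster_point[of \<mu>, OF \<mu>(2) _ _ _ \<mu>(3) \<open>t \<longlonglongrightarrow> upper_dd A\<close>] \<mu>(1)
    unfolding density_measure_def by auto
  then show ?thesis
    using density_measure_between_lower_upper(2)[OF _ A] by (blast intro: order_antisym)
qed

lemma lower_dd_attained:
  assumes A: "A \<subseteq> Npos"
  shows "\<exists>\<mu>. density_measure \<mu> \<and> \<mu> A = lower_dd A"
proof -
  obtain \<mu> where \<mu>: "density_measure \<mu>" "\<mu> (Npos - A) = upper_dd (Npos - A)"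
    using upper_dd_attained[of "Npos - A"] by auto
  have "\<mu> Npos = \<mu> A + \<mu> (Npos - A)"
    using density_measure_Diff[OF \<mu>(1) A] by simp
  then have "\<mu> A \<le> lower_dd A"
    using \<mu> lower_dd_Npos_Diff_ge[OF A] unfolding density_measure_def by linarith
  then show ?thesis
    using density_measure_between_lower_upper(1)[OF \<mu>(1) A] \<mu>(1) by (blast intro: order_antisym)
qed

theorem corollary3p3:
  fixes A :: "nat set" and x :: real
  assumes "A \<subseteq> Npos"
  shows "(\<exists>\<mu>. density_measure \<mu> \<and> \<mu> A = x) \<longleftrightarrow> x \<in> {lower_dd A .. upper_dd A}"
proof
  assume "\<exists>\<mu>. density_measure \<mu> \<and> \<mu> A = x"
  then show "x \<in> {lower_dd A .. upper_dd A}"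
    using density_measure_between_lower_upper[OF _ assms] by auto
next
  assume "x \<in> {lower_dd A .. upper_dd A}"
  then have "x \<in> closed_segment (lower_dd A) (upper_dd A)"
    by (simp add: closed_segment_eq_real_ivl)
  then obtain t where t: "0 \<le> t" "t \<le> 1" "x = (1 - t) * lower_dd A + t * upper_dd A"
    by (auto simp: in_segment)
  obtain \<mu> \<nu> where \<mu>: "density_measure \<mu>" "\<mu> A = lower_dd A"
    and \<nu>: "density_measure \<nu>" "\<nu> A = upper_dd A"
    using lower_dd_attained[OF assms] upper_dd_attained[OF assms] by blast
  show "\<exists>\<mu>. density_measure \<mu> \<and> \<mu> A = x"
    using density_measure_convex_combination[OF \<mu>(1) \<nu>(1) t(1,2)] \<mu>(2) \<nu>(2) t(3) by auto
qed

end
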